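(* Let $G$ be a finite group and let $M$ be a nonzero cyclic $\mathbb{B}[G]$-module (i.e. generated by a single element as a $\mathbb{B}[G]$-module). Then $M$ is a quasi-free $\mathbb{B}$-module.
   Context: $\mathbb{B}=\{0,1\}$ is the Boolean semifield with $1+1=1$, and $\mathbb{B}[G]$ is the group semiring. For a module $M$ over a semiring $R$, elements $x_1,\dots,x_n\in M$ are quasi-independent if any equation $x_i=\sum_j c_jx_j$ with $c_j\in R$ implies $c_j=\delta_{ij}$ for all $j$; a quasi-basis is a quasi-independent set of generators; $M$ is quasi-free (of finite rank $n$) if it has a quasi-basis with $n$ elements. *)

theory Defs
  imports "HOL-Algebra.Module"
begin

definition semimodule :: "('a, 'c) ring_scheme \<Rightarrow> ('a, 'b, 'd) module_scheme \<Rightarrow> bool" where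
  "semimodule R M \<longleftrightarrow>
     abelian_monoid M \<and>
     (\<forall>r\<in>carrier R. \<forall>m\<in>carrier M. r \<odot>\<^bsub>M\<^esub> m \<in> carrier M) \<and>
     (\<forall>r\<in>carrier R. \<forall>s\<in>carrier R. \<forall>m\<in>carrier M.
        (r \<otimes>\<^bsub>R\<^esub> s) \<odot>\<^bsub>M\<^esub> m = r \<odot>\<^bsub>M\<^esub> (s \<odot>\<^bsub>M\<^esub> m)) \<and>
     (\<forall>r\<in>carrier R. \<forall>s\<in>carrier R. \<forall>m\<in>carrier M.
        (r \<oplus>\<^bsub>R\<^esub> s) \<odot>\<^bsub>M\<^esub> m = (r \<odot>\<^bsub>M\<^esub> m) \<oplus>\<^bsub>M\<^esub> (s \<odot>\<^bsub>M\<^esub> m)) \<and>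
     (\<forall>r\<in>carrier R. \<forall>m\<in>carrier M. \<forall>n\<in>carrier M.
        r \<odot>\<^bsub>M\<^esub> (m \<oplus>\<^bsub>M\<^esub> n) = (r \<odot>\<^bsub>M\<^esub> m) \<oplus>\<^bsub>M\<^esub> (r \<odot>\<^bsub>M\<^esub> n)) \<and>
     (\<forall>m\<in>carrier M. \<one>\<^bsub>R\<^esub> \<odot>\<^bsub>M\<^esub> m = m) \<and>
     (\<forall>m\<in>carrier M. \<zero>\<^bsub>R\<^esub> \<odot>\<^bsub>M\<^esub> m = \<zero>\<^bsub>M\<^esub>) \<and>
     (\<forall>r\<in>carrier R. r \<odot>\<^bsub>M\<^esub> \<zero>\<^bsub>M\<^esub> = \<zero>\<^bsub>M\<^esub>)"

definition Bool_semiring :: "bool ring" where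
  "Bool_semiring = \<lparr>carrier = UNIV, mult = (\<and>), one = True, zero = False, add = (\<or>)\<rparr>"

text \<open>The group semiring B[G]: finitely supported B-valued functions on G, i.e. finite subsets
 of G; addition is union, multiplication is the convolution (set product).\<close>
definition group_semiring_B :: "('g, 'x) monoid_scheme \<Rightarrow> 'g set ring" where
  "group_semiring_B G = \<lparr>carrier = {S. S \<subseteq> carrier G \<and> finite S},
     mult = (\<lambda>S T. {x \<otimes>\<^bsub>G\<^esub> y | x y. x \<in> S \<and> y \<in> T}),
     one = {\<one>\<^bsub>G\<^esub>}, zero = {}, add = (\<union>)\<rparr>"

definition B_to_BG :: "('g, 'x) monoid_scheme \<Rightarrow> bool \<Rightarrow> 'g set" where
  "B_to_BG G b = (if b then {\<one>\<^bsub>G\<^esub>} else {})"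

definition restrict_to_B ::
  "('g, 'x) monoid_scheme \<Rightarrow> ('g set, 'm, 'y) module_scheme \<Rightarrow> (bool, 'm) module" where
  "restrict_to_B G M = \<lparr>carrier = carrier M, mult = mult M, one = one M, zero = zero M,
     add = add M, smult = (\<lambda>b m. B_to_BG G b \<odot>\<^bsub>M\<^esub> m)\<rparr>"

definition cyclic_module :: "('a, 'c) ring_scheme \<Rightarrow> ('a, 'b, 'd) module_scheme \<Rightarrow> bool" where
  "cyclic_module R M \<longleftrightarrow>
     (\<exists>g\<in>carrier M. \<forall>m\<in>carrier M. \<exists>r\<in>carrier R. m = r \<odot>\<^bsub>M\<^esub> g)"

definition lincomb :: "('a, 'b, 'd) module_scheme \<Rightarrow> (nat \<Rightarrow> 'a) \<Rightarrow> (nat \<Rightarrow> 'b) \<Rightarrow> nat \<Rightarrow> 'b" where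
  "lincomb M c x n = foldr (\<lambda>j acc. (c j \<odot>\<^bsub>M\<^esub> x j) \<oplus>\<^bsub>M\<^esub> acc) [0..<n] \<zero>\<^bsub>M\<^esub>"

definition quasi_independent ::
  "('a, 'c) ring_scheme \<Rightarrow> ('a, 'b, 'd) module_scheme \<Rightarrow> (nat \<Rightarrow> 'b) \<Rightarrow> nat \<Rightarrow> bool" where
  "quasi_independent R M x n \<longleftrightarrow>
     (\<forall>i<n. \<forall>c. (\<forall>j<n. c j \<in> carrier R) \<longrightarrow> x i = lincomb M c x n \<longrightarrow>
        (\<forall>j<n. c j = (if j = i then \<one>\<^bsub>R\<^esub> else \<zero>\<^bsub>R\<^esub>)))"

definition quasi_basis ::
  "('a, 'c) ring_scheme \<Rightarrow> ('a, 'b, 'd) module_scheme \<Rightarrow> (nat \<Rightarrow> 'b) \<Rightarrow> nat \<Rightarrow> bool" where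
  "quasi_basis R M x n \<longleftrightarrow>
     (\<forall>j<n. x j \<in> carrier M) \<and>
     (\<forall>m\<in>carrier M. \<exists>c. (\<forall>j<n. c j \<in> carrier R) \<and> m = lincomb M c x n) \<and>
     quasi_independent R M x n"

definition quasi_free :: "('a, 'c) ring_scheme \<Rightarrow> ('a, 'b, 'd) module_scheme \<Rightarrow> bool" where
  "quasi_free R M \<longleftrightarrow> (\<exists>n x. quasi_basis R M x n)"

end

theory Submission
  imports Defs "HOL-Algebra.Multiplicative_Group"
begin

text \<open>Let g generate M. Every element of M has the form S \<odot> g = \<Oplus>s\<in>S. {s} \<odot> g for a finite
  S \<subseteq> G, and M is idempotent because 1 + 1 = 1 in \<B>; hence every element is the sum of a subset
  of the orbit X = {{a} \<odot> g | a \<in> G}. The orbit is an antichain for the natural order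
  (x \<le> y iff x \<oplus> y = y): if {a} \<odot> g \<le> {b} \<odot> g, put d = b\<inverse>a; then {d} \<odot> g \<le> g,
  so {d ^ k} \<odot> g \<le> g for all k, and taking k = |G| - 1 gives
  {d} \<odot> g = {d} \<odot> ({d ^ k} \<odot> g \<oplus> g) = g \<oplus> {d} \<odot> g = g.
  Finally, a generating antichain without 0 is a quasi-basis: in x_i = \<Sum>c_j x_j every x_j
  with c_j = 1 lies below x_i, hence equals it.\<close>

locale idempotent_abelian_monoid = abelian_monoid +
  assumes add_idem: "x \<in> carrier G \<Longrightarrow> x \<oplus> x = x"
begin

lemma finsum_absorbs_term:
  assumes "finite A" "a \<in> A" "f \<in> A \<rightarrow> carrier G"
  shows "f a \<oplus> finsum G f A = finsum G f A"
proof -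
  have fa: "f a \<in> carrier G" and rest: "f \<in> A - {a} \<rightarrow> carrier G"
    using assms by auto
  have split: "finsum G f A = f a \<oplus> finsum G f (A - {a})"
    using finsum_insert[of "A - {a}" a f] assms fa rest by (simp add: insert_absorb)
  show ?thesis
    unfolding split using fa rest finsum_closed[OF rest] by (simp add: a_assoc[symmetric] add_idem)
qed

lemma finsum_eq_finsum_image:
  assumes "finite A" "f \<in> A \<rightarrow> carrier G"
  shows "finsum G f A = (\<Oplus>y\<in>f ` A. y)"
  using assms
proof (induction A rule: finite_induct)
  case (insert a A)
  then have fA: "f \<in> A \<rightarrow> carrier G" and fa: "f a \<in> carrier G" by auto
  have "finsum G f (insert a A) = f a \<oplus> (\<Oplus>y\<in>f ` A. y)"
    using insert fA fa by simp
  also have "\<dots> = (\<Oplus>y\<in>f ` insert a A. y)"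
  proof (cases "f a \<in> f ` A")
    case True
    then show ?thesis
      using finsum_absorbs_term[of "f ` A" "f a" "\<lambda>y. y"] insert fA
      by (auto simp: insert_absorb)
  next
    case False
    have "(\<lambda>y. y) \<in> f ` A \<rightarrow> carrier G" using fA by auto
    then show ?thesis
      using finsum_insert[of "f ` A" "f a" "\<lambda>y. y"] False insert.hyps(1) fa by simp
  qed
  finally show ?case .
qed simp

end

lemma lincomb_eq_finsum:
  assumes "abelian_monoid M" "\<And>j. j < n \<Longrightarrow> c j \<odot>\<^bsub>M\<^esub> x j \<in> carrier M"
  shows "lincomb M c x n = (\<Oplus>\<^bsub>M\<^esub>j\<in>{..<n}. c j \<odot>\<^bsub>M\<^esub> x j)"
proof -
  interpret abelian_monoid M by fact
  have "foldr (\<lambda>j acc. c j \<odot>\<^bsub>M\<^esub> x j \<oplus>\<^bsub>M\<^esub> acc) js \<zero>\<^bsub>M\<^esub> = (\<Oplus>\<^bsub>M\<^esub>j\<in>set js. c j \<odot>\<^bsub>M\<^esub> x j)"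
    if "distinct js" "set js \<subseteq> {..<n}" for js
    using that
  proof (induction js)
    case (Cons j js)
    then show ?case
      using finsum_insert[of "set js" j "\<lambda>j. c j \<odot>\<^bsub>M\<^esub> x j"] assms(2) by (simp add: subset_eq)
  qed simp
  from this[of "[0..<n]"] show ?thesis
    unfolding lincomb_def by (simp add: atLeast0LessThan)
qed

lemma Bool_semimodule_smult:
  assumes "semimodule Bool_semiring N" "m \<in> carrier N"
  shows "b \<odot>\<^bsub>N\<^esub> m = (if b then m else \<zero>\<^bsub>N\<^esub>)"
proof -
  have "True \<odot>\<^bsub>N\<^esub> m = m" "False \<odot>\<^bsub>N\<^esub> m = \<zero>\<^bsub>N\<^esub>"
    using assms unfolding semimodule_def by (simp_all add: Bool_semiring_def)
  then show ?thesis by simp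
qed

lemma Bool_semimodule_idempotent:
  assumes "semimodule Bool_semiring N"
  shows "idempotent_abelian_monoid N"
proof -
  have "abelian_monoid N" using assms unfolding semimodule_def by blast
  moreover have "m \<oplus>\<^bsub>N\<^esub> m = m" if "m \<in> carrier N" for m
  proof -
    have "\<forall>r s. \<forall>m\<in>carrier N. (r \<or> s) \<odot>\<^bsub>N\<^esub> m = r \<odot>\<^bsub>N\<^esub> m \<oplus>\<^bsub>N\<^esub> s \<odot>\<^bsub>N\<^esub> m"
      using assms unfolding semimodule_def by (simp add: Bool_semiring_def)
    from this[rule_format, OF that, of True True] show ?thesis
      using Bool_semimodule_smult[OF assms that] by simp
  qed
  ultimately show ?thesis
    by (simp add: idempotent_abelian_monoid_def idempotent_abelian_monoid_axioms_def)
qed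

lemma Bool_lincomb_eq_finsum:
  assumes "semimodule Bool_semiring N" "x ` {..<n} \<subseteq> carrier N"
  shows "lincomb N c x n = (\<Oplus>\<^bsub>N\<^esub>j\<in>{j. j < n \<and> c j}. x j)"
proof -
  interpret abelian_monoid N using assms(1) unfolding semimodule_def by blast
  note smult = Bool_semimodule_smult[OF assms(1)]
  have "c j \<odot>\<^bsub>N\<^esub> x j \<in> carrier N" if "j < n" for j
    using smult assms(2) that by auto
  then have "lincomb N c x n = (\<Oplus>\<^bsub>N\<^esub>j\<in>{..<n}. c j \<odot>\<^bsub>N\<^esub> x j)"
    by (rule lincomb_eq_finsum[OF abelian_monoid_axioms])
  also have "\<dots> = (\<Oplus>\<^bsub>N\<^esub>j\<in>{j. j < n \<and> c j}. x j)"
    by (rule add.finprod_mono_neutral_cong_left[symmetric]) (use smult assms(2) in auto)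
  finally show ?thesis .
qed

lemma quasi_basis_of_generating_antichain:
  assumes N: "semimodule Bool_semiring N"
    and x: "bij_betw x {..<n} X" and X: "X \<subseteq> carrier N" "\<zero>\<^bsub>N\<^esub> \<notin> X"
    and generating: "\<And>m. m \<in> carrier N \<Longrightarrow> \<exists>Y\<subseteq>X. m = (\<Oplus>\<^bsub>N\<^esub>y\<in>Y. y)"
    and antichain: "\<And>a b. a \<in> X \<Longrightarrow> b \<in> X \<Longrightarrow> a \<oplus>\<^bsub>N\<^esub> b = b \<Longrightarrow> a = b"
  shows "quasi_basis Bool_semiring N x n"
proof -
  interpret idempotent_abelian_monoid N using N by (rule Bool_semimodule_idempotent)
  have x_carrier: "x ` {..<n} \<subseteq> carrier N"
    using x X by (simp add: bij_betw_def)
  have x_inj: "inj_on x {..<n}"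
    using x by (simp add: bij_betw_def)
  have lincomb: "lincomb N c x n = (\<Oplus>\<^bsub>N\<^esub>j\<in>{j. j < n \<and> c j}. x j)" for c
    by (rule Bool_lincomb_eq_finsum[OF N x_carrier])
  have "\<exists>c. m = lincomb N c x n" if m: "m \<in> carrier N" for m
  proof -
    obtain Y where Y: "Y \<subseteq> X" "m = (\<Oplus>\<^bsub>N\<^esub>y\<in>Y. y)"
      using generating[OF m] by blast
    define J where "J = {j. j < n \<and> x j \<in> Y}"
    have "Y = x ` J"
      using x Y(1) unfolding J_def bij_betw_def by auto
    then have "m = (\<Oplus>\<^bsub>N\<^esub>j\<in>J. x j)"
      using Y(2) finsum_reindex[of "\<lambda>y. y" x J] x_inj x_carrier
      by (auto simp: J_def intro: inj_on_subset)
    then show ?thesis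
      unfolding lincomb J_def by (intro exI[of _ "\<lambda>j. x j \<in> Y"]) simp
  qed
  moreover have "quasi_independent Bool_semiring N x n"
    unfolding quasi_independent_def
  proof (intro allI impI)
    fix i c j
    assume i: "i < n" and xi: "x i = lincomb N c x n" and j: "j < n"
    define J where "J = {j. j < n \<and> c j}"
    have x_i: "x i = (\<Oplus>\<^bsub>N\<^esub>j\<in>J. x j)"
      using xi unfolding lincomb J_def .
    have J_sub: "J \<subseteq> {i}"
    proof
      fix k assume "k \<in> J"
      then have "x k \<oplus>\<^bsub>N\<^esub> x i = x i"
        unfolding x_i using finsum_absorbs_term[of J k x] x_carrier by (auto simp: J_def)
      then have "x k = x i"
        using antichain x i \<open>k \<in> J\<close> unfolding J_def bij_betw_def by auto
      then show "k \<in> {i}"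
        using x_inj i \<open>k \<in> J\<close> unfolding J_def inj_on_def by auto
    qed
    have "J \<noteq> {}"
      using x_i X(2) x i unfolding bij_betw_def by (metis finsum_empty image_eqI lessThan_iff)
    with J_sub have "J = {i}" by blast
    then show "c j = (if j = i then \<one>\<^bsub>Bool_semiring\<^esub> else \<zero>\<^bsub>Bool_semiring\<^esub>)"
      using j unfolding J_def Bool_semiring_def by auto
  qed
  ultimately show ?thesis
    unfolding quasi_basis_def using x_carrier by (auto simp: Bool_semiring_def)
qed

lemma finsum_restrict_to_B: "finsum (restrict_to_B G M) = finsum M"
  by (intro ext) (simp add: finsum_def finprod_def restrict_to_B_def)

locale BG_semimodule = G: group G for G :: "('g, 'x) monoid_scheme" +
  fixes M :: "('g set, 'm, 'y) module_scheme"
  assumes semimodule: "semimodule (group_semiring_B G) M"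
begin

sublocale M: abelian_monoid M
  using semimodule unfolding semimodule_def by blast

lemma smult_closed:
  "S \<subseteq> carrier G \<Longrightarrow> finite S \<Longrightarrow> m \<in> carrier M \<Longrightarrow> S \<odot>\<^bsub>M\<^esub> m \<in> carrier M"
  using semimodule unfolding semimodule_def group_semiring_B_def by auto

lemma smult_Un:
  "S \<subseteq> carrier G \<Longrightarrow> finite S \<Longrightarrow> T \<subseteq> carrier G \<Longrightarrow> finite T \<Longrightarrow> m \<in> carrier M \<Longrightarrow>
    (S \<union> T) \<odot>\<^bsub>M\<^esub> m = S \<odot>\<^bsub>M\<^esub> m \<oplus>\<^bsub>M\<^esub> T \<odot>\<^bsub>M\<^esub> m"
  using semimodule unfolding semimodule_def group_semiring_B_def by auto

lemma smult_add:
  "S \<subseteq> carrier G \<Longrightarrow> finite S \<Longrightarrow> m \<in> carrier M \<Longrightarrow> m' \<in> carrier M \<Longrightarrow>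
    S \<odot>\<^bsub>M\<^esub> (m \<oplus>\<^bsub>M\<^esub> m') = S \<odot>\<^bsub>M\<^esub> m \<oplus>\<^bsub>M\<^esub> S \<odot>\<^bsub>M\<^esub> m'"
  using semimodule unfolding semimodule_def group_semiring_B_def by auto

lemma smult_empty: "m \<in> carrier M \<Longrightarrow> {} \<odot>\<^bsub>M\<^esub> m = \<zero>\<^bsub>M\<^esub>"
  using semimodule unfolding semimodule_def group_semiring_B_def by auto

lemma smult_zero: "S \<subseteq> carrier G \<Longrightarrow> finite S \<Longrightarrow> S \<odot>\<^bsub>M\<^esub> \<zero>\<^bsub>M\<^esub> = \<zero>\<^bsub>M\<^esub>"
  using semimodule unfolding semimodule_def group_semiring_B_def by auto

lemma smult_one: "m \<in> carrier M \<Longrightarrow> {\<one>\<^bsub>G\<^esub>} \<odot>\<^bsub>M\<^esub> m = m"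
  using semimodule unfolding semimodule_def group_semiring_B_def by auto

lemma smult_singleton_mult:
  assumes "a \<in> carrier G" "b \<in> carrier G" "m \<in> carrier M"
  shows "{a \<otimes>\<^bsub>G\<^esub> b} \<odot>\<^bsub>M\<^esub> m = {a} \<odot>\<^bsub>M\<^esub> ({b} \<odot>\<^bsub>M\<^esub> m)"
proof -
  have "\<forall>S T. S \<subseteq> carrier G \<and> finite S \<longrightarrow> T \<subseteq> carrier G \<and> finite T \<longrightarrow>
      (\<forall>m\<in>carrier M. {x \<otimes>\<^bsub>G\<^esub> y | x y. x \<in> S \<and> y \<in> T} \<odot>\<^bsub>M\<^esub> m = S \<odot>\<^bsub>M\<^esub> (T \<odot>\<^bsub>M\<^esub> m))"
    using semimodule unfolding semimodule_def by (simp add: group_semiring_B_def)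
  from this[rule_format, of "{a}" "{b}" m] assms
  have "{x \<otimes>\<^bsub>G\<^esub> y | x y. x \<in> {a} \<and> y \<in> {b}} \<odot>\<^bsub>M\<^esub> m = {a} \<odot>\<^bsub>M\<^esub> ({b} \<odot>\<^bsub>M\<^esub> m)"
    by simp
  moreover have "{x \<otimes>\<^bsub>G\<^esub> y | x y. x \<in> {a} \<and> y \<in> {b}} = {a \<otimes>\<^bsub>G\<^esub> b}"
    by auto
  ultimately show ?thesis by simp
qed

lemma smult_singleton_closed: "a \<in> carrier G \<Longrightarrow> m \<in> carrier M \<Longrightarrow> {a} \<odot>\<^bsub>M\<^esub> m \<in> carrier M"
  by (simp add: smult_closed)

sublocale M: idempotent_abelian_monoid M
proof
  fix m assume m: "m \<in> carrier M"
  then show "m \<oplus>\<^bsub>M\<^esub> m = m"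
    using smult_Un[of "{\<one>\<^bsub>G\<^esub>}" "{\<one>\<^bsub>G\<^esub>}" m] by (simp add: smult_one)
qed

lemma smult_eq_finsum_image:
  assumes "S \<subseteq> carrier G" "finite S" "m \<in> carrier M"
  shows "S \<odot>\<^bsub>M\<^esub> m = (\<Oplus>\<^bsub>M\<^esub>y\<in>(\<lambda>s. {s} \<odot>\<^bsub>M\<^esub> m) ` S. y)"
proof -
  have "S \<odot>\<^bsub>M\<^esub> m = (\<Oplus>\<^bsub>M\<^esub>s\<in>S. {s} \<odot>\<^bsub>M\<^esub> m)"
    using assms(2,1)
  proof (induction S rule: finite_induct)
    case (insert s S)
    then have "insert s S \<odot>\<^bsub>M\<^esub> m = {s} \<odot>\<^bsub>M\<^esub> m \<oplus>\<^bsub>M\<^esub> S \<odot>\<^bsub>M\<^esub> m"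
      using smult_Un[of "{s}" S m] assms(3) by simp
    moreover have "(\<lambda>s. {s} \<odot>\<^bsub>M\<^esub> m) \<in> insert s S \<rightarrow> carrier M"
      using insert.prems assms(3) by (auto simp: smult_singleton_closed)
    ultimately show ?case
      using insert by simp
  qed (simp add: smult_empty assms(3))
  also have "\<dots> = (\<Oplus>\<^bsub>M\<^esub>y\<in>(\<lambda>s. {s} \<odot>\<^bsub>M\<^esub> m) ` S. y)"
    using assms by (intro M.finsum_eq_finsum_image) (auto simp: smult_singleton_closed)
  finally show ?thesis .
qed

lemma smult_singleton_eq_zero_iff:
  assumes "a \<in> carrier G" "m \<in> carrier M"
  shows "{a} \<odot>\<^bsub>M\<^esub> m = \<zero>\<^bsub>M\<^esub> \<longleftrightarrow> m = \<zero>\<^bsub>M\<^esub>"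
proof
  assume "{a} \<odot>\<^bsub>M\<^esub> m = \<zero>\<^bsub>M\<^esub>"
  then have "{inv\<^bsub>G\<^esub> a \<otimes>\<^bsub>G\<^esub> a} \<odot>\<^bsub>M\<^esub> m = \<zero>\<^bsub>M\<^esub>"
    using assms smult_singleton_mult[of "inv\<^bsub>G\<^esub> a" a m] by (simp add: smult_zero)
  then show "m = \<zero>\<^bsub>M\<^esub>"
    using assms by (simp add: smult_one)
qed (use assms in \<open>simp add: smult_zero\<close>)

lemma smult_pow_absorbed:
  assumes d: "d \<in> carrier G" and m: "m \<in> carrier M"
    and absorbed: "{d} \<odot>\<^bsub>M\<^esub> m \<oplus>\<^bsub>M\<^esub> m = m"
  shows "{d [^]\<^bsub>G\<^esub> (k::nat)} \<odot>\<^bsub>M\<^esub> m \<oplus>\<^bsub>M\<^esub> m = m"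
proof (induction k)
  case 0
  show ?case using m by (simp add: smult_one M.add_idem)
next
  case (Suc k)
  have dk: "d [^]\<^bsub>G\<^esub> k \<in> carrier G" using d by simp
  have "{d [^]\<^bsub>G\<^esub> Suc k} \<odot>\<^bsub>M\<^esub> m \<oplus>\<^bsub>M\<^esub> m
      = {d} \<odot>\<^bsub>M\<^esub> ({d [^]\<^bsub>G\<^esub> k} \<odot>\<^bsub>M\<^esub> m) \<oplus>\<^bsub>M\<^esub> ({d} \<odot>\<^bsub>M\<^esub> m \<oplus>\<^bsub>M\<^esub> m)"
    using smult_singleton_mult[OF d dk m] G.nat_pow_Suc2[OF d] absorbed by simp
  also have "\<dots> = {d} \<odot>\<^bsub>M\<^esub> ({d [^]\<^bsub>G\<^esub> k} \<odot>\<^bsub>M\<^esub> m \<oplus>\<^bsub>M\<^esub> m) \<oplus>\<^bsub>M\<^esub> m"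
    using d dk m by (simp add: smult_add smult_singleton_closed M.a_assoc)
  also have "\<dots> = m"
    using Suc.IH absorbed by simp
  finally show ?case .
qed

lemma smult_fixed_if_absorbed:
  assumes fin: "finite (carrier G)" and d: "d \<in> carrier G" and m: "m \<in> carrier M"
    and absorbed: "{d} \<odot>\<^bsub>M\<^esub> m \<oplus>\<^bsub>M\<^esub> m = m"
  shows "{d} \<odot>\<^bsub>M\<^esub> m = m"
proof -
  obtain k where k: "order G = Suc k"
    using G.order_gt_0_iff_finite fin gr0_implies_Suc by blast
  have dk: "d [^]\<^bsub>G\<^esub> k \<in> carrier G" using d by simp
  have "d \<otimes>\<^bsub>G\<^esub> d [^]\<^bsub>G\<^esub> k = \<one>\<^bsub>G\<^esub>"
    using G.pow_order_eq_1[OF d] k G.nat_pow_Suc2[OF d] by simp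
  then have inverse: "{d} \<odot>\<^bsub>M\<^esub> ({d [^]\<^bsub>G\<^esub> k} \<odot>\<^bsub>M\<^esub> m) = m"
    using smult_singleton_mult[OF d dk m] m by (simp add: smult_one)
  have "{d} \<odot>\<^bsub>M\<^esub> m = {d} \<odot>\<^bsub>M\<^esub> ({d [^]\<^bsub>G\<^esub> k} \<odot>\<^bsub>M\<^esub> m \<oplus>\<^bsub>M\<^esub> m)"
    using smult_pow_absorbed[OF d m absorbed] by simp
  also have "\<dots> = m \<oplus>\<^bsub>M\<^esub> {d} \<odot>\<^bsub>M\<^esub> m"
    using d dk m inverse by (simp add: smult_add smult_singleton_closed)
  also have "\<dots> = m"
    using absorbed m d by (simp add: M.a_comm smult_singleton_closed)
  finally show ?thesis .
qed

lemma translate_absorbed_imp_eq: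
  assumes fin: "finite (carrier G)" and a: "a \<in> carrier G" and b: "b \<in> carrier G"
    and m: "m \<in> carrier M"
    and absorbed: "{a} \<odot>\<^bsub>M\<^esub> m \<oplus>\<^bsub>M\<^esub> {b} \<odot>\<^bsub>M\<^esub> m = {b} \<odot>\<^bsub>M\<^esub> m"
  shows "{a} \<odot>\<^bsub>M\<^esub> m = {b} \<odot>\<^bsub>M\<^esub> m"
proof -
  define d where "d = inv\<^bsub>G\<^esub> b \<otimes>\<^bsub>G\<^esub> a"
  have d: "d \<in> carrier G" and b_inv: "inv\<^bsub>G\<^esub> b \<in> carrier G"
    using a b by (simp_all add: d_def)
  have a_eq: "a = b \<otimes>\<^bsub>G\<^esub> d"
    using a b by (simp add: d_def G.m_assoc[symmetric])
  have "{inv\<^bsub>G\<^esub> b} \<odot>\<^bsub>M\<^esub> ({a} \<odot>\<^bsub>M\<^esub> m \<oplus>\<^bsub>M\<^esub> {b} \<odot>\<^bsub>M\<^esub> m) = {inv\<^bsub>G\<^esub> b} \<odot>\<^bsub>M\<^esub> ({b} \<odot>\<^bsub>M\<^esub> m)"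
    using absorbed by simp
  then have "{d} \<odot>\<^bsub>M\<^esub> m \<oplus>\<^bsub>M\<^esub> m = m"
    using a b b_inv m smult_singleton_mult[OF b_inv a m] smult_singleton_mult[OF b_inv b m]
    by (simp add: smult_add smult_singleton_closed smult_one d_def)
  then have "{d} \<odot>\<^bsub>M\<^esub> m = m"
    by (rule smult_fixed_if_absorbed[OF fin d m])
  then show ?thesis
    using a_eq smult_singleton_mult[OF b d m] by simp
qed

lemma semimodule_restrict_to_B: "semimodule Bool_semiring (restrict_to_B G M)"
proof -
  have "abelian_monoid (restrict_to_B G M)"
    by (rule abelian_monoidI) (simp_all add: restrict_to_B_def M.a_ac)
  moreover have "B_to_BG G b \<subseteq> carrier G" "finite (B_to_BG G b)" for b
    by (simp_all add: B_to_BG_def)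
  moreover have "B_to_BG G (r \<and> s) = {x \<otimes>\<^bsub>G\<^esub> y | x y. x \<in> B_to_BG G r \<and> y \<in> B_to_BG G s}" for r s
    by (auto simp: B_to_BG_def)
  moreover have "B_to_BG G (r \<or> s) = B_to_BG G r \<union> B_to_BG G s" for r s
    by (simp add: B_to_BG_def)
  ultimately show ?thesis
    using semimodule unfolding semimodule_def
    by (simp add: restrict_to_B_def Bool_semiring_def group_semiring_B_def B_to_BG_def)
qed

lemma quasi_basis_orbit:
  assumes fin: "finite (carrier G)" and g: "g \<in> carrier M" "g \<noteq> \<zero>\<^bsub>M\<^esub>"
    and gen: "\<And>m. m \<in> carrier M \<Longrightarrow> \<exists>S. S \<subseteq> carrier G \<and> finite S \<and> m = S \<odot>\<^bsub>M\<^esub> g"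
    and x: "bij_betw x {..<n} ((\<lambda>a. {a} \<odot>\<^bsub>M\<^esub> g) ` carrier G)"
  shows "quasi_basis Bool_semiring (restrict_to_B G M) x n"
proof (rule quasi_basis_of_generating_antichain[OF semimodule_restrict_to_B x])
  let ?X = "(\<lambda>a. {a} \<odot>\<^bsub>M\<^esub> g) ` carrier G"
  show "?X \<subseteq> carrier (restrict_to_B G M)"
    using g by (auto simp: restrict_to_B_def smult_singleton_closed)
  show "\<zero>\<^bsub>restrict_to_B G M\<^esub> \<notin> ?X"
  proof
    assume "\<zero>\<^bsub>restrict_to_B G M\<^esub> \<in> ?X"
    then obtain a where "a \<in> carrier G" "{a} \<odot>\<^bsub>M\<^esub> g = \<zero>\<^bsub>M\<^esub>"
      by (auto simp: restrict_to_B_def)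
    with g show False
      by (simp add: smult_singleton_eq_zero_iff)
  qed
next
  fix m assume "m \<in> carrier (restrict_to_B G M)"
  then obtain S where S: "S \<subseteq> carrier G" "finite S" and m: "m = S \<odot>\<^bsub>M\<^esub> g"
    using gen by (auto simp: restrict_to_B_def)
  have "(\<lambda>s. {s} \<odot>\<^bsub>M\<^esub> g) ` S \<subseteq> (\<lambda>a. {a} \<odot>\<^bsub>M\<^esub> g) ` carrier G"
    using S by auto
  with smult_eq_finsum_image[OF S g(1)]
  show "\<exists>Y\<subseteq>(\<lambda>a. {a} \<odot>\<^bsub>M\<^esub> g) ` carrier G. m = (\<Oplus>\<^bsub>restrict_to_B G M\<^esub>y\<in>Y. y)"
    unfolding m finsum_restrict_to_B by blast
next
  fix a b
  assume "a \<in> (\<lambda>a. {a} \<odot>\<^bsub>M\<^esub> g) ` carrier G" "b \<in> (\<lambda>a. {a} \<odot>\<^bsub>M\<^esub> g) ` carrier G"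
    and absorbed: "a \<oplus>\<^bsub>restrict_to_B G M\<^esub> b = b"
  then obtain a' b' where "a' \<in> carrier G" "b' \<in> carrier G"
    and "a = {a'} \<odot>\<^bsub>M\<^esub> g" "b = {b'} \<odot>\<^bsub>M\<^esub> g"
    by blast
  with absorbed translate_absorbed_imp_eq[OF fin _ _ g(1)] show "a = b"
    by (simp add: restrict_to_B_def)
qed

end

theorem proposition4p12:
  fixes G :: "('g, 'x) monoid_scheme" and M :: "('g set, 'm, 'y) module_scheme"
  assumes "group G" and "finite (carrier G)"
    and "semimodule (group_semiring_B G) M"
    and "cyclic_module (group_semiring_B G) M"
    and "carrier M \<noteq> {\<zero>\<^bsub>M\<^esub>}"
  shows "quasi_free Bool_semiring (restrict_to_B G M)"
proof -
  interpret BG_semimodule G M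
    using assms(1,3) by (simp add: BG_semimodule_def BG_semimodule_axioms_def)
  obtain g where g: "g \<in> carrier M"
    and gen: "\<And>m. m \<in> carrier M \<Longrightarrow> \<exists>S. S \<subseteq> carrier G \<and> finite S \<and> m = S \<odot>\<^bsub>M\<^esub> g"
    using assms(4) unfolding cyclic_module_def group_semiring_B_def by auto
  have "g \<noteq> \<zero>\<^bsub>M\<^esub>"
    using assms(5) gen smult_zero by fastforce
  define X where "X = (\<lambda>a. {a} \<odot>\<^bsub>M\<^esub> g) ` carrier G"
  obtain x where "bij_betw x {..<card X} X"
    using ex_bij_betw_nat_finite[of X] assms(2) by (auto simp: X_def atLeast0LessThan)
  then have "quasi_basis Bool_semiring (restrict_to_B G M) x (card X)"
    unfolding X_def using quasi_basis_orbit assms(2) g \<open>g \<noteq> \<zero>\<^bsub>M\<^esub>\<close> gen by blast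
  then show ?thesis
    unfolding quasi_free_def by blast
qed

end
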